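(* Let $G$ be a $4$-Sachs minimal graph in $\mathfrak{G}_{n,m}$ and let $\mathbf{B}_G$ be a spanning subgraph of $G$ which is a difference graph with bipartition $(U,W)$. Let $\overline{\mathbf{B}_G}$ be the graph obtained from $G$ by deleting all edges of $\mathbf{B}_G$ and then deleting all isolated vertices. If $V(\overline{\mathbf{B}_G})\subseteq U$, then $$\mathbf{a}_4(G)=\mathbf{a}_4(\mathbf{B}_G)+\mathbf{a}_4(\overline{\mathbf{B}_G})+\sum_{e_i\in E(\overline{\mathbf{B}_G})}\epsilon(\mathbf{B}_G\setminus V(e_i))-2\sum_{\{e_p,e_q\}}n_W(e_p,e_q),$$ where the first sum is over all edges $e_i$ of $\overline{\mathbf{B}_G}$ and the second over all pairs of distinct adjacent edges $e_p,e_q$ of $\overline{\mathbf{B}_G}$.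
   Context: $\mathfrak{G}_{n,m}$ is the set of connected simple graphs with $n$ vertices and $m$ edges. $\mathbf{a}_4(G)$ is the coefficient of $\lambda^{\nu(G)-4}$ in $\det(\lambda\mathbf{I}-\mathbf{A}(G))$ (equivalently, number of 2-matchings minus twice the number of 4-cycles). $G\in\mathfrak{G}_{n,m}$ is $4$-Sachs minimal if $\mathbf{a}_4(G)=\min\{\mathbf{a}_4(H):H\in\mathfrak{G}_{n,m}\}$. A difference graph is a bipartite graph in which the neighborhoods of the vertices of one part are linearly ordered by inclusion. $\epsilon(H)$ is the number of edges of $H$; $V(e)$ is the set of endpoints of an edge $e$; $\mathbf{B}_G\setminus V(e_i)$ is obtained by deleting these two vertices and incident edges. For adjacent edges $e_p=xx_p$, $e_q=xx_q$ of $\overline{\mathbf{B}_G}$, $n_W(e_p,e_q)=|\{w\in W: wx_p\in E(G),\ wx_q\in E(G)\}|$. *)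

theory Defs
  imports Main
begin

type_synonym 'a ugraph = "'a set \<times> 'a set set"

definition verts :: "'a ugraph \<Rightarrow> 'a set" where "verts G = fst G"
definition edges :: "'a ugraph \<Rightarrow> 'a set set" where "edges G = snd G"

definition simple_graph :: "'a ugraph \<Rightarrow> bool" where
  "simple_graph G \<longleftrightarrow> finite (verts G) \<and>
     (\<forall>e\<in>edges G. \<exists>u v. u \<in> verts G \<and> v \<in> verts G \<and> u \<noteq> v \<and> e = {u, v})"

definition connected_graph :: "'a ugraph \<Rightarrow> bool" where
  "connected_graph G \<longleftrightarrow> simple_graph G \<and>
     (\<forall>u\<in>verts G. \<forall>v\<in>verts G. (u, v) \<in> {(x, y). {x, y} \<in> edges G}\<^sup>*)"

definition graph_class :: "nat \<Rightarrow> nat \<Rightarrow> 'a ugraph set" where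
  "graph_class n m = {G. connected_graph G \<and> card (verts G) = n \<and> card (edges G) = m}"

definition two_matchings :: "'a ugraph \<Rightarrow> 'a set set set" where
  "two_matchings G = {{e, f} | e f. e \<in> edges G \<and> f \<in> edges G \<and> e \<inter> f = {}}"

definition four_cycles :: "'a ugraph \<Rightarrow> 'a set set set" where
  "four_cycles G = {C. C \<subseteq> edges G \<and> (\<exists>a b c d. distinct [a, b, c, d] \<and>
      C = {{a, b}, {b, c}, {c, d}, {d, a}})}"

definition a4 :: "'a ugraph \<Rightarrow> int" where
  "a4 G = int (card (two_matchings G)) - 2 * int (card (four_cycles G))"

definition sachs4_minimal :: "nat \<Rightarrow> nat \<Rightarrow> 'a ugraph \<Rightarrow> bool" where
  "sachs4_minimal n m G \<longleftrightarrow> G \<in> graph_class n m \<and> (\<forall>H \<in> (graph_class n m :: 'a ugraph set). a4 G \<le> a4 H)"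

definition spanning_subgraph :: "'a ugraph \<Rightarrow> 'a ugraph \<Rightarrow> bool" where
  "spanning_subgraph B G \<longleftrightarrow> verts B = verts G \<and> edges B \<subseteq> edges G"

definition nbhd :: "'a ugraph \<Rightarrow> 'a \<Rightarrow> 'a set" where
  "nbhd G x = {y. {x, y} \<in> edges G}"

definition difference_graph :: "'a ugraph \<Rightarrow> 'a set \<Rightarrow> 'a set \<Rightarrow> bool" where
  "difference_graph B U W \<longleftrightarrow> simple_graph B \<and> U \<inter> W = {} \<and> U \<union> W = verts B \<and>
     (\<forall>e\<in>edges B. \<exists>u w. u \<in> U \<and> w \<in> W \<and> e = {u, w}) \<and>
     ((\<forall>x\<in>U. \<forall>y\<in>U. nbhd B x \<subseteq> nbhd B y \<or> nbhd B y \<subseteq> nbhd B x) \<or>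
      (\<forall>x\<in>W. \<forall>y\<in>W. nbhd B x \<subseteq> nbhd B y \<or> nbhd B y \<subseteq> nbhd B x))"

text \<open>Complement of B in G: delete edges of B, then isolated vertices.\<close>
definition co_graph :: "'a ugraph \<Rightarrow> 'a ugraph \<Rightarrow> 'a ugraph" where
  "co_graph G B = (\<Union>(edges G - edges B), edges G - edges B)"

text \<open>Number of edges of H after deleting the vertices of e (and incident edges).\<close>
definition eps_del :: "'a ugraph \<Rightarrow> 'a set \<Rightarrow> nat" where
  "eps_del H e = card {f \<in> edges H. f \<inter> e = {}}"

definition adj_edge_pairs :: "'a ugraph \<Rightarrow> 'a set set set" where
  "adj_edge_pairs H = {{ep, eq} | ep eq. ep \<in> edges H \<and> eq \<in> edges H \<and> ep \<noteq> eq \<and> ep \<inter> eq \<noteq> {}}"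

text \<open>n_W(e_p,e_q) for e_p = x x_p, e_q = x x_q: the non-shared endpoints are
  (e_p \<union> e_q) - (e_p \<inter> e_q) = {x_p, x_q}.\<close>
definition n_W :: "'a ugraph \<Rightarrow> 'a set \<Rightarrow> 'a set set \<Rightarrow> nat" where
  "n_W G W P = card {w \<in> W. \<forall>y \<in> \<Union>P - \<Inter>P. {w, y} \<in> edges G}"

end

theory Submission
  imports Defs
begin

(* Split the edges of G into those of B and those of C = co_graph G B. A 2-matching or a
   4-cycle of G lies in B, lies in C, or is mixed. A mixed 2-matching is an edge e of C
   together with an edge of B avoiding V(e), whence the eps_del sum. In a mixed 4-cycle
   some vertex w lies in W; as the edges of C lie inside U and those of B join U to W, the
   two neighbours of w and the vertex x opposite to w all lie in U. So the cycle consists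
   of two adjacent edges xp, xq of C and the two edges wp, wq of B, and mixed 4-cycles
   correspond bijectively to adjacent pairs of C together with a common W-neighbour of
   their free ends, whence the n_W sum. *)

lemma finite_edges: "simple_graph G \<Longrightarrow> finite (edges G)"
  unfolding simple_graph_def
  by (rule finite_subset[of _ "Pow (verts G)"]) auto

lemma card_edge: "simple_graph G \<Longrightarrow> e \<in> edges G \<Longrightarrow> card e = 2"
  unfolding simple_graph_def by auto

lemma edge_end_in_verts: "simple_graph G \<Longrightarrow> {x, y} \<in> edges G \<Longrightarrow> x \<in> verts G"
  unfolding simple_graph_def by (auto simp: doubleton_eq_iff)

lemma card_2E:
  assumes "card e = 2" and "x \<in> e"
  obtains y where "x \<noteq> y" and "e = {x, y}"
proof -
  obtain u v where e: "e = {u, v}" "u \<noteq> v"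
    using assms(1) by (auto simp: card_2_iff)
  show thesis
  proof (cases "x = u")
    case True
    with e that show thesis by blast
  next
    case False
    with e assms(2) have "x = v" by blast
    with e that show thesis by (metis insert_commute)
  qed
qed

lemma finite_adj_edge_pairs: "finite (edges H) \<Longrightarrow> finite (adj_edge_pairs H)"
  unfolding adj_edge_pairs_def by (rule finite_subset[of _ "Pow (edges H)"]) auto

definition is_two_matching :: "'a set set \<Rightarrow> bool" where
  "is_two_matching X \<longleftrightarrow> (\<exists>e f. X = {e, f} \<and> e \<inter> f = {})"

definition is_four_cycle :: "'a set set \<Rightarrow> bool" where
  "is_four_cycle Q \<longleftrightarrow> (\<exists>a b c d. distinct [a, b, c, d] \<and> Q = {{a, b}, {b, c}, {c, d}, {d, a}})"

lemma two_matchings_eq: "two_matchings H = {X. X \<subseteq> edges H \<and> is_two_matching X}"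
  unfolding two_matchings_def is_two_matching_def by auto

lemma four_cycles_eq: "four_cycles H = {Q. Q \<subseteq> edges H \<and> is_four_cycle Q}"
  unfolding four_cycles_def is_four_cycle_def by blast

lemma is_two_matching_nonempty: "is_two_matching X \<Longrightarrow> X \<noteq> {}"
  unfolding is_two_matching_def by auto

lemma is_four_cycle_nonempty: "is_four_cycle Q \<Longrightarrow> Q \<noteq> {}"
  unfolding is_four_cycle_def by auto

lemma card_subsets_Un_disjoint:
  assumes fin: "finite (E \<union> F)" and disj: "E \<inter> F = {}" and nonempty: "\<And>X. P X \<Longrightarrow> X \<noteq> {}"
  shows "card {X. X \<subseteq> E \<union> F \<and> P X}
    = card {X. X \<subseteq> E \<and> P X} + card {X. X \<subseteq> F \<and> P X}
      + card {X. X \<subseteq> E \<union> F \<and> P X \<and> \<not> X \<subseteq> E \<and> \<not> X \<subseteq> F}"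
    (is "card ?all = card ?inE + card ?inF + card ?mixed")
proof -
  have finite_subsets: "finite {X. X \<subseteq> S \<and> Q X}" if "S \<subseteq> E \<union> F" for S and Q :: "'a set \<Rightarrow> bool"
    by (rule finite_subset[of _ "Pow (E \<union> F)"]) (use fin that in auto)
  have "card ?all = card ((?inE \<union> ?inF) \<union> ?mixed)"
    by (rule arg_cong[where f = card], rule set_eqI)
      (simp only: mem_Collect_eq Un_iff, meson le_supI1 le_supI2)
  also have "\<dots> = card (?inE \<union> ?inF) + card ?mixed"
  proof (rule card_Un_disjoint)
    show "finite (?inE \<union> ?inF)" "finite ?mixed"
      by (simp_all add: finite_subsets)
    show "(?inE \<union> ?inF) \<inter> ?mixed = {}"
      by (simp add: disjoint_iff)
  qed
  also have "card (?inE \<union> ?inF) = card ?inE + card ?inF"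
  proof (rule card_Un_disjoint)
    show "finite ?inE" "finite ?inF"
      by (simp_all add: finite_subsets)
    show "?inE \<inter> ?inF = {}"
      using disj nonempty by blast
  qed
  finally show ?thesis .
qed

lemma inj_on_doubleton: "A \<inter> B = {} \<Longrightarrow> inj_on (\<lambda>(a, b). {a, b}) (A \<times> B)"
  by (auto simp: inj_on_def doubleton_eq_iff)

lemma card_mixed_two_matchings:
  assumes fin: "finite E" "finite F" and disj: "E \<inter> F = {}"
  shows "card {X. X \<subseteq> E \<union> F \<and> is_two_matching X \<and> \<not> X \<subseteq> E \<and> \<not> X \<subseteq> F}
    = (\<Sum>e\<in>F. card {f \<in> E. f \<inter> e = {}})"
proof -
  let ?pairs = "SIGMA e:F. {f \<in> E. f \<inter> e = {}}"
  have "{X. X \<subseteq> E \<union> F \<and> is_two_matching X \<and> \<not> X \<subseteq> E \<and> \<not> X \<subseteq> F}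
      = (\<lambda>(e, f). {e, f}) ` ?pairs"
  proof (intro set_eqI iffI)
    fix X
    assume "X \<in> {X. X \<subseteq> E \<union> F \<and> is_two_matching X \<and> \<not> X \<subseteq> E \<and> \<not> X \<subseteq> F}"
    then obtain a b where X: "X = {a, b}" "a \<inter> b = {}" "X \<subseteq> E \<union> F" "\<not> X \<subseteq> E" "\<not> X \<subseteq> F"
      unfolding is_two_matching_def by blast
    then have "a \<in> F \<and> b \<in> E \<or> b \<in> F \<and> a \<in> E"
      by auto
    then show "X \<in> (\<lambda>(e, f). {e, f}) ` ?pairs"
    proof
      assume "a \<in> F \<and> b \<in> E"
      with X show ?thesis
        by (intro image_eqI[of _ _ "(a, b)"]) auto
    next
      assume "b \<in> F \<and> a \<in> E"
      with X show ?thesis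
        by (intro image_eqI[of _ _ "(b, a)"]) auto
    qed
  next
    fix X
    assume "X \<in> (\<lambda>(e, f). {e, f}) ` ?pairs"
    then obtain e f where "X = {e, f}" "e \<in> F" "f \<in> E" "f \<inter> e = {}"
      by auto
    with disj show "X \<in> {X. X \<subseteq> E \<union> F \<and> is_two_matching X \<and> \<not> X \<subseteq> E \<and> \<not> X \<subseteq> F}"
      unfolding is_two_matching_def by auto
  qed
  moreover have "inj_on (\<lambda>(e, f). {e, f}) ?pairs"
    by (rule inj_on_subset[OF inj_on_doubleton[of F E]]) (use disj in auto)
  ultimately show ?thesis
    using fin by (simp add: card_image)
qed

lemma card_two_matchings_Un:
  assumes "finite (edges G)" and "edges G = edges B \<union> edges C" and "edges B \<inter> edges C = {}"
  shows "card (two_matchings G)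
    = card (two_matchings B) + card (two_matchings C) + (\<Sum>e\<in>edges C. eps_del B e)"
proof -
  have "finite (edges B)" "finite (edges C)"
    using assms(1,2) by auto
  then show ?thesis
    unfolding two_matchings_eq eps_del_def assms(2)
    using card_subsets_Un_disjoint[OF _ assms(3) is_two_matching_nonempty]
      card_mixed_two_matchings[OF _ _ assms(3)]
    by simp
qed

(* For an adjacent pair P = {xp, xq}, the free ends \<Union>P - \<Inter>P are p and q, as in n_W, and
   pair_cycle w P is the 4-cycle x p w q. *)
definition pair_cycle :: "'a \<Rightarrow> 'a set set \<Rightarrow> 'a set set" where
  "pair_cycle w P = P \<union> (\<lambda>y. {w, y}) ` (\<Union>P - \<Inter>P)"

lemma free_ends_adjacent_pair: "distinct [x, p, q] \<Longrightarrow> \<Union>{{x, p}, {x, q}} - \<Inter>{{x, p}, {x, q}} = {p, q}"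
  by auto

lemma pair_cycle_adjacent_pair:
  assumes "distinct [x, p, q]"
  shows "pair_cycle w {{x, p}, {x, q}} = {{x, p}, {x, q}, {w, p}, {w, q}}"
  unfolding pair_cycle_def free_ends_adjacent_pair[OF assms] by auto

lemma adj_edge_pairsE:
  assumes "P \<in> adj_edge_pairs H" and "\<And>e. e \<in> edges H \<Longrightarrow> card e = 2"
  obtains x p q where "distinct [x, p, q]" "P = {{x, p}, {x, q}}" "{x, p} \<in> edges H" "{x, q} \<in> edges H"
proof -
  obtain e f where P: "P = {e, f}" "e \<in> edges H" "f \<in> edges H" "e \<noteq> f" "e \<inter> f \<noteq> {}"
    using assms(1) unfolding adj_edge_pairs_def by blast
  then obtain x where "x \<in> e" "x \<in> f"
    by blast
  obtain p where p: "x \<noteq> p" "e = {x, p}"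
    using card_2E[OF assms(2)[OF P(2)] \<open>x \<in> e\<close>] .
  obtain q where q: "x \<noteq> q" "f = {x, q}"
    using card_2E[OF assms(2)[OF P(3)] \<open>x \<in> f\<close>] .
  have "p \<noteq> q"
    using P(4) p q by auto
  show thesis
  proof (rule that)
    show "distinct [x, p, q]"
      using p q \<open>p \<noteq> q\<close> by simp
    show "P = {{x, p}, {x, q}}" "{x, p} \<in> edges H" "{x, q} \<in> edges H"
      using P p q by simp_all
  qed
qed

locale bipartite_edge_split =
  fixes G B C :: "'a ugraph" and U W :: "'a set"
  assumes simple: "simple_graph G"
    and edges_split: "edges G = edges B \<union> edges C"
    and edges_disjoint: "edges B \<inter> edges C = {}"
    and parts_disjoint: "U \<inter> W = {}"
    and B_edges_cross: "\<And>e. e \<in> edges B \<Longrightarrow> \<exists>u w. u \<in> U \<and> w \<in> W \<and> e = {u, w}"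
    and C_edges_inside: "\<And>e. e \<in> edges C \<Longrightarrow> e \<subseteq> U"
begin

lemma edge_in_B_iff: "e \<in> edges G \<Longrightarrow> e \<in> edges B \<longleftrightarrow> e \<inter> W \<noteq> {}"
  using edges_split B_edges_cross C_edges_inside parts_disjoint by blast

lemma no_edge_inside_W:
  assumes "{x, y} \<in> edges G" and "x \<in> W"
  shows "y \<notin> W"
proof -
  have "{x, y} \<in> edges B"
    using edge_in_B_iff[OF assms(1)] assms(2) by blast
  then obtain u w where "u \<in> U" "w \<in> W" "{x, y} = {u, w}"
    using B_edges_cross by blast
  then show ?thesis
    using assms(2) parts_disjoint by (auto simp: doubleton_eq_iff)
qed

definition closing_pairs :: "('a set set \<times> 'a) set" where
  "closing_pairs = (SIGMA P:adj_edge_pairs C. {w \<in> W. \<forall>y \<in> \<Union>P - \<Inter>P. {w, y} \<in> edges G})"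

definition mixed_four_cycles :: "'a set set set" where
  "mixed_four_cycles = {Q. Q \<subseteq> edges G \<and> is_four_cycle Q \<and> \<not> Q \<subseteq> edges B \<and> \<not> Q \<subseteq> edges C}"

lemma card_C_edge: "e \<in> edges C \<Longrightarrow> card e = 2"
  using card_edge[OF simple] edges_split by blast

lemma closing_pairsE:
  assumes "(P, w) \<in> closing_pairs"
  obtains x p q where "distinct [w, p, x, q]" "P = {{x, p}, {x, q}}"
    "pair_cycle w P = {{x, p}, {x, q}, {w, p}, {w, q}}" "{x, p, q} \<subseteq> U" "w \<in> W"
    "{x, p} \<in> edges C" "{x, q} \<in> edges C" "{w, p} \<in> edges B" "{w, q} \<in> edges B"
proof -
  have P: "P \<in> adj_edge_pairs C" and w: "w \<in> W" "\<forall>y \<in> \<Union>P - \<Inter>P. {w, y} \<in> edges G"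
    using assms unfolding closing_pairs_def by auto
  obtain x p q where xpq: "distinct [x, p, q]" "P = {{x, p}, {x, q}}"
    "{x, p} \<in> edges C" "{x, q} \<in> edges C"
    using adj_edge_pairsE[OF P card_C_edge] by metis
  have "{w, p} \<in> edges G" "{w, q} \<in> edges G"
    using w(2) free_ends_adjacent_pair[OF xpq(1)] xpq(2) by auto
  then have B: "{w, p} \<in> edges B" "{w, q} \<in> edges B"
    using edge_in_B_iff w(1) by auto
  have U: "{x, p, q} \<subseteq> U"
    using C_edges_inside xpq(3,4) by auto
  then have "distinct [w, p, x, q]"
    using xpq(1) w(1) parts_disjoint by auto
  then show thesis
    using that[OF _ xpq(2) _ U w(1) xpq(3,4) B] pair_cycle_adjacent_pair[OF xpq(1)] xpq(2) by simp
qed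

lemma pair_cycle_mixed: "(P, w) \<in> closing_pairs \<Longrightarrow> pair_cycle w P \<in> mixed_four_cycles"
proof (erule closing_pairsE)
  fix x p q
  assume "distinct [w, p, x, q]" and cycle: "pair_cycle w P = {{x, p}, {x, q}, {w, p}, {w, q}}"
    and C: "{x, p} \<in> edges C" "{x, q} \<in> edges C" and B: "{w, p} \<in> edges B" "{w, q} \<in> edges B"
  moreover have "{{x, p}, {x, q}, {w, p}, {w, q}} = {{w, p}, {p, x}, {x, q}, {q, w}}"
    by (simp add: insert_commute)
  ultimately have "is_four_cycle (pair_cycle w P)"
    unfolding is_four_cycle_def by metis
  moreover have "{x, p} \<notin> edges B" "{w, p} \<notin> edges C"
    using B C edges_disjoint by auto
  ultimately show "pair_cycle w P \<in> mixed_four_cycles"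
    unfolding mixed_four_cycles_def using cycle B C edges_split by auto
qed

lemma pair_cycle_inter_C: "(P, w) \<in> closing_pairs \<Longrightarrow> pair_cycle w P \<inter> edges C = P"
proof (erule closing_pairsE)
  fix x p q
  assume "P = {{x, p}, {x, q}}" "pair_cycle w P = {{x, p}, {x, q}, {w, p}, {w, q}}"
    "{x, p} \<in> edges C" "{x, q} \<in> edges C" "{w, p} \<in> edges B" "{w, q} \<in> edges B"
  then show "pair_cycle w P \<inter> edges C = P"
    using edges_disjoint by auto
qed

lemma pair_cycle_inter_W: "(P, w) \<in> closing_pairs \<Longrightarrow> \<Union>(pair_cycle w P) \<inter> W = {w}"
proof (erule closing_pairsE)
  fix x p q
  assume "pair_cycle w P = {{x, p}, {x, q}, {w, p}, {w, q}}" "{x, p, q} \<subseteq> U" "w \<in> W"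
  then show "\<Union>(pair_cycle w P) \<inter> W = {w}"
    using parts_disjoint by auto
qed

lemma inj_on_pair_cycle: "inj_on (\<lambda>(P, w). pair_cycle w P) closing_pairs"
proof (rule inj_onI, clarify)
  fix P w P' w'
  assume "(P, w) \<in> closing_pairs" "(P', w') \<in> closing_pairs" "pair_cycle w P = pair_cycle w' P'"
  then show "P = P' \<and> w = w'"
    using pair_cycle_inter_C pair_cycle_inter_W by (metis singleton_inject)
qed

lemma pair_cycle_at_W_corner:
  assumes abcd: "distinct [a, b, c, d]" and Q: "Q = {{a, b}, {b, c}, {c, d}, {d, a}}"
    and "Q \<subseteq> edges G" and "\<not> Q \<subseteq> edges B" and "a \<in> W"
  shows "Q \<in> (\<lambda>(P, w). pair_cycle w P) ` closing_pairs"
proof -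
  have E: "{a, b} \<in> edges G" "{b, c} \<in> edges G" "{c, d} \<in> edges G" "{a, d} \<in> edges G"
    using Q \<open>Q \<subseteq> edges G\<close> by (auto simp: insert_commute)
  have "b \<notin> W" "d \<notin> W"
    using no_edge_inside_W E(1,4) \<open>a \<in> W\<close> by auto
  have "c \<notin> W"
  proof
    assume "c \<in> W"
    then have "Q \<subseteq> edges B"
      using Q E edge_in_B_iff \<open>a \<in> W\<close> by (auto simp: insert_commute)
    with \<open>\<not> Q \<subseteq> edges B\<close> show False ..
  qed
  have dist: "distinct [c, b, d]"
    using abcd by auto
  have C: "{c, b} \<in> edges C" "{c, d} \<in> edges C"
    using E(2,3) edge_in_B_iff edges_split \<open>b \<notin> W\<close> \<open>c \<notin> W\<close> \<open>d \<notin> W\<close>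
    by (auto simp: insert_commute)
  have "{c, b} \<noteq> {c, d}" "{c, b} \<inter> {c, d} \<noteq> {}"
    using dist by (auto simp: doubleton_eq_iff)
  with C have "{{c, b}, {c, d}} \<in> adj_edge_pairs C"
    unfolding adj_edge_pairs_def by blast
  moreover have "a \<in> {w \<in> W. \<forall>y \<in> \<Union>{{c, b}, {c, d}} - \<Inter>{{c, b}, {c, d}}. {w, y} \<in> edges G}"
    unfolding free_ends_adjacent_pair[OF dist] using E(1,4) \<open>a \<in> W\<close> by simp
  ultimately have "({{c, b}, {c, d}}, a) \<in> closing_pairs"
    unfolding closing_pairs_def by (rule SigmaI)
  moreover have "Q = pair_cycle a {{c, b}, {c, d}}"
    unfolding pair_cycle_adjacent_pair[OF dist] Q by (simp add: insert_commute)
  ultimately show ?thesis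
    by (auto intro: image_eqI)
qed

lemma mixed_four_cycles_eq_image: "mixed_four_cycles = (\<lambda>(P, w). pair_cycle w P) ` closing_pairs"
proof
  show "(\<lambda>(P, w). pair_cycle w P) ` closing_pairs \<subseteq> mixed_four_cycles"
    using pair_cycle_mixed by auto
  show "mixed_four_cycles \<subseteq> (\<lambda>(P, w). pair_cycle w P) ` closing_pairs"
  proof
    fix Q
    assume "Q \<in> mixed_four_cycles"
    then have Q: "Q \<subseteq> edges G" "\<not> Q \<subseteq> edges B" "\<not> Q \<subseteq> edges C" "is_four_cycle Q"
      unfolding mixed_four_cycles_def by auto
    then obtain a b c d where abcd: "distinct [a, b, c, d]" "Q = {{a, b}, {b, c}, {c, d}, {d, a}}"
      unfolding is_four_cycle_def by blast
    have "a \<in> W \<or> b \<in> W \<or> c \<in> W \<or> d \<in> W"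
    proof (rule ccontr)
      assume "\<not> (a \<in> W \<or> b \<in> W \<or> c \<in> W \<or> d \<in> W)"
      then have "Q \<subseteq> edges C"
        using Q(1) abcd(2) edge_in_B_iff edges_split by auto
      with Q(3) show False ..
    qed
    moreover have "Q = {{b, c}, {c, d}, {d, a}, {a, b}}" "Q = {{c, d}, {d, a}, {a, b}, {b, c}}"
      "Q = {{d, a}, {a, b}, {b, c}, {c, d}}"
      using abcd(2) by (simp_all add: insert_commute)
    moreover have "distinct [b, c, d, a]" "distinct [c, d, a, b]" "distinct [d, a, b, c]"
      using abcd(1) by auto
    ultimately show "Q \<in> (\<lambda>(P, w). pair_cycle w P) ` closing_pairs"
      using pair_cycle_at_W_corner[OF _ _ Q(1,2)] abcd by metis
  qed
qed

lemma finite_closing_fibre: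
  assumes "P \<in> adj_edge_pairs C"
  shows "finite {w \<in> W. \<forall>y \<in> \<Union>P - \<Inter>P. {w, y} \<in> edges G}"
proof -
  obtain x p q where "distinct [x, p, q]" "P = {{x, p}, {x, q}}"
    using adj_edge_pairsE[OF assms card_C_edge] by metis
  then have "p \<in> \<Union>P - \<Inter>P"
    by auto
  then have "{w \<in> W. \<forall>y \<in> \<Union>P - \<Inter>P. {w, y} \<in> edges G} \<subseteq> verts G"
    using edge_end_in_verts[OF simple] by blast
  moreover have "finite (verts G)"
    using simple unfolding simple_graph_def by simp
  ultimately show ?thesis
    by (rule finite_subset)
qed

lemma card_mixed_four_cycles: "card mixed_four_cycles = (\<Sum>P \<in> adj_edge_pairs C. n_W G W P)"
proof -
  have "finite (adj_edge_pairs C)"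
    using finite_edges[OF simple] edges_split by (intro finite_adj_edge_pairs) simp
  then show ?thesis
    unfolding mixed_four_cycles_eq_image card_image[OF inj_on_pair_cycle]
    unfolding closing_pairs_def n_W_def
    using finite_closing_fibre by simp
qed

lemma card_four_cycles_Un:
  "card (four_cycles G)
    = card (four_cycles B) + card (four_cycles C) + (\<Sum>P \<in> adj_edge_pairs C. n_W G W P)"
  using card_subsets_Un_disjoint[OF _ edges_disjoint is_four_cycle_nonempty]
    finite_edges[OF simple] edges_split card_mixed_four_cycles
  unfolding four_cycles_eq mixed_four_cycles_def by simp

end

theorem theorem4p2:
  fixes G B :: "'a ugraph" and U W :: "'a set" and n m :: nat
  assumes "sachs4_minimal n m G"
    and "spanning_subgraph B G"
    and "difference_graph B U W"
    and "verts (co_graph G B) \<subseteq> U"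
  shows "a4 G = a4 B + a4 (co_graph G B)
           + int (\<Sum>e\<in>edges (co_graph G B). eps_del B e)
           - 2 * int (\<Sum>P\<in>adj_edge_pairs (co_graph G B). n_W G W P)"
proof -
  have simple: "simple_graph G"
    using assms(1) unfolding sachs4_minimal_def graph_class_def connected_graph_def by simp
  have co_edges: "edges (co_graph G B) = edges G - edges B"
    and co_verts: "verts (co_graph G B) = \<Union>(edges G - edges B)"
    unfolding co_graph_def edges_def verts_def by simp_all
  interpret bipartite_edge_split G B "co_graph G B" U W
  proof
    show "edges G = edges B \<union> edges (co_graph G B)"
      using assms(2) co_edges unfolding spanning_subgraph_def by auto
    show "e \<subseteq> U" if "e \<in> edges (co_graph G B)" for e
      using assms(4) that co_edges co_verts by auto
  qed (use simple co_edges assms(3) in \<open>auto simp: difference_graph_def\<close>)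
  show ?thesis
    unfolding a4_def
    using card_two_matchings_Un[OF finite_edges[OF simple] edges_split edges_disjoint]
      card_four_cycles_Un
    by simp
qed

end
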